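(* Let $\mathbf{x}\in\mathbb{R}^{3n}$ be a pose whose points are not all collinear, and let $F:\mathbb{R}\times\mathbb{R}^{3n}\to\mathbb{R}^{3n}$ be any map with $F(0,\mathbf{x})=\mathbf{x}$ and $t\mapsto F(t,\mathbf{x})$ differentiable at $t=0$. Define $\mathbf{x}(t):=\mathrm{RMSDAlign}(\mathbf{x},F(t,\mathbf{x}))$ and assume $\mathbf{x}(0)=\mathbf{x}$ and that the aligning rotation and translation are differentiable at $t=0$. Then $\frac{d}{dt}\frac1n\sum_i\mathbf{x}_i(t)\big|_{t=0}=0$ and $\sum_i(\mathbf{x}_i-\bar{\mathbf{x}})\times\frac{d}{dt}\mathbf{x}_i(t)\big|_{t=0}=0$, where $\bar{\mathbf{x}}=\frac1n\sum_i\mathbf{x}_i$.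
   Context: $\mathrm{RMSD}(\mathbf{x},\mathbf{x}')=\big(\frac1n\sum_i\|\mathbf{x}_i-\mathbf{x}'_i\|^2\big)^{1/2}$ for $\mathbf{x},\mathbf{x}'\in\mathbb{R}^{3n}$ (viewed as $n$ points in $\mathbb{R}^3$). $\mathrm{RMSDAlign}(\mathbf{x},\mathbf{x}')=\operatorname{argmin}_{\mathbf{x}^\dagger\in\{g\mathbf{x}'\mid g\in SE(3)\}}\mathrm{RMSD}(\mathbf{x},\mathbf{x}^\dagger)$, where $SE(3)$ acts on each point. *)

theory Defs
  imports "HOL-Analysis.Analysis"
begin

text \<open>A pose of n points in R^3 is an element of real^3^'n (point i is x$i, n = CARD('n)).
  SE(3) acts pointwise: g = (Q, b) with Q a rotation matrix, point p goes to Q p + b.\<close>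

definition se3_act :: "real^3^3 \<Rightarrow> real^3 \<Rightarrow> real^3^'n \<Rightarrow> real^3^'n" where
  "se3_act Q b y = (\<chi> i. Q *v (y $ i) + b)"

definition RMSD :: "real^3^'n::finite \<Rightarrow> real^3^'n \<Rightarrow> real" where
  "RMSD x x' = sqrt ((1 / real CARD('n)) * (\<Sum>i\<in>UNIV. (norm (x $ i - x' $ i))\<^sup>2))"

definition se3_orbit :: "real^3^'n \<Rightarrow> (real^3^'n) set" where
  "se3_orbit y = {se3_act Q b y | Q b. rotation_matrix Q}"

definition is_RMSDAlign :: "real^3^'n::finite \<Rightarrow> real^3^'n \<Rightarrow> real^3^'n \<Rightarrow> bool" where
  "is_RMSDAlign x x' z \<longleftrightarrow> z \<in> se3_orbit x' \<and> (\<forall>w\<in>se3_orbit x'. RMSD x z \<le> RMSD x w)"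

definition centroid :: "real^3^'n::finite \<Rightarrow> real^3" where
  "centroid y = (1 / real CARD('n)) *\<^sub>R (\<Sum>i\<in>UNIV. y $ i)"

end

theory Submission
  imports Defs
begin

text \<open>An RMSD alignment y(t) of F(t,x) to x cannot be improved by any further rigid motion applied
  to it. Optimality against translations forces \<open>\<Sum>\<^sub>i y\<^sub>i(t) = \<Sum>\<^sub>i x\<^sub>i\<close>, and optimality against the
  one-parameter rotation groups about the three coordinate axes forces \<open>\<Sum>\<^sub>i y\<^sub>i(t) \<times> x\<^sub>i = 0\<close>
  (a maximum of \<open>c A + s B\<close> over the unit circle at \<open>(c,s) = (1,0)\<close> needs \<open>B = 0\<close>).
  Both identities hold for every t, so differentiating them at 0 gives the two claims; the
  second becomes \<open>\<Sum>\<^sub>i (x\<^sub>i - centroid x) \<times> y\<^sub>i'(0) = 0\<close> because \<open>\<Sum>\<^sub>i y\<^sub>i'(0) = 0\<close>.\<close>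

lemma unit_circle_max_at_one_imp_eq_0:
  fixes A B :: real
  assumes "\<And>c s. c\<^sup>2 + s\<^sup>2 = 1 \<Longrightarrow> c * A + s * B \<le> A"
  shows "B = 0"
proof (rule ccontr)
  assume B: "B \<noteq> 0"
  define r where "r = sqrt (A\<^sup>2 + B\<^sup>2)"
  have r2: "r\<^sup>2 = A\<^sup>2 + B\<^sup>2" unfolding r_def by simp
  have r: "r > 0" unfolding r_def using B by (simp add: sum_power2_gt_zero_iff)
  have "(A/r)\<^sup>2 + (B/r)\<^sup>2 = 1"
    using r2 r B by (simp add: power_divide add_divide_distrib[symmetric])
  from assms[OF this] have "(A\<^sup>2 + B\<^sup>2) / r \<le> A"
    by (simp add: power2_eq_square add_divide_distrib)
  moreover have "(A\<^sup>2 + B\<^sup>2) / r = r"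
    using r2 r by (metis nonzero_mult_div_cancel_left order_less_irrefl power2_eq_square)
  ultimately have "r\<^sup>2 \<le> A\<^sup>2" using r by (simp add: power_mono)
  thus False using r2 B by simp
qed

definition rotation_x :: "real \<Rightarrow> real \<Rightarrow> real^3^3" where
  "rotation_x c s = vector [vector [1,0,0], vector [0,c,-s], vector [0,s,c]]"

definition rotation_y :: "real \<Rightarrow> real \<Rightarrow> real^3^3" where
  "rotation_y c s = vector [vector [c,0,s], vector [0,1,0], vector [-s,0,c]]"

definition rotation_z :: "real \<Rightarrow> real \<Rightarrow> real^3^3" where
  "rotation_z c s = vector [vector [c,-s,0], vector [s,c,0], vector [0,0,1]]"

lemmas rotation_axis_defs = rotation_x_def rotation_y_def rotation_z_def

lemma rotation_matrix_rotation_axis: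
  assumes "c\<^sup>2 + s\<^sup>2 = 1"
  shows "rotation_matrix (rotation_x c s)" "rotation_matrix (rotation_y c s)"
    "rotation_matrix (rotation_z c s)"
  using assms
  by (simp_all add: rotation_matrix_def orthogonal_matrix_def rotation_axis_defs det_3 vec_eq_iff
      forall_3 matrix_matrix_mult_def transpose_def sum_3 mat_def vector_def power2_eq_square
      algebra_simps)

lemma inner_rotation_axis:
  fixes u v :: "real^3"
  shows "u \<bullet> (rotation_x c s *v v) = c * (u \<bullet> v - u$1 * v$1) + s * cross3 v u $ 1 + u$1 * v$1"
    "u \<bullet> (rotation_y c s *v v) = c * (u \<bullet> v - u$2 * v$2) + s * cross3 v u $ 2 + u$2 * v$2"
    "u \<bullet> (rotation_z c s *v v) = c * (u \<bullet> v - u$3 * v$3) + s * cross3 v u $ 3 + u$3 * v$3"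
  by (simp_all add: rotation_axis_defs cross3_def inner_vec_def sum_3 matrix_vector_mult_def
      vector_def algebra_simps)

lemma rotation_matrix_mul:
  fixes A B :: "real^'n^'n"
  shows "rotation_matrix A \<Longrightarrow> rotation_matrix B \<Longrightarrow> rotation_matrix (A ** B)"
  by (simp add: rotation_matrix_def orthogonal_matrix_mul det_mul)

lemma rotation_matrix_id: "rotation_matrix (mat 1)"
  by (simp add: rotation_matrix_def orthogonal_matrix_id det_I)

lemma norm_rotation_matrix_mult:
  fixes R :: "real^'n^'n"
  assumes "rotation_matrix R"
  shows "norm (R *v v) = norm v"
  using assms
  by (simp add: rotation_matrix_def orthogonal_transformation_matrix orthogonal_transformation_norm)

lemma power2_norm_diff:
  fixes u v :: "'a::real_inner"
  shows "(norm (u - v))\<^sup>2 = (norm u)\<^sup>2 - 2 * (u \<bullet> v) + (norm v)\<^sup>2"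
  by (simp add: power2_norm_eq_inner inner_diff_left inner_diff_right inner_commute)

lemma sum_diff_eq_0_if_translation_optimal:
  fixes x y :: "'i::finite \<Rightarrow> 'a::real_inner"
  assumes opt: "\<And>c. (\<Sum>i\<in>UNIV. (norm (x i - y i))\<^sup>2) \<le> (\<Sum>i\<in>UNIV. (norm (x i - (y i + c)))\<^sup>2)"
  shows "(\<Sum>i\<in>UNIV. x i - y i) = 0"
proof -
  define D where "D = (\<Sum>i\<in>UNIV. x i - y i)"
  define N where "N = real CARD('i)"
  have N: "N > 0" unfolding N_def by simp
  define c where "c = (1/N) *\<^sub>R D"
  have shift: "x i - (y i + c) = (x i - y i) - c" for i by simp
  have "(\<Sum>i\<in>UNIV. (norm (x i - (y i + c)))\<^sup>2)
      = (\<Sum>i\<in>UNIV. (norm (x i - y i))\<^sup>2 - 2 * ((x i - y i) \<bullet> c) + (norm c)\<^sup>2)"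
    unfolding shift power2_norm_diff by simp
  also have "\<dots> = (\<Sum>i\<in>UNIV. (norm (x i - y i))\<^sup>2) - 2 * (D \<bullet> c) + N * (norm c)\<^sup>2"
    by (simp add: sum.distrib sum_subtractf sum_distrib_left[symmetric] inner_sum_left inner_diff_left D_def N_def)
  also have "\<dots> = (\<Sum>i\<in>UNIV. (norm (x i - y i))\<^sup>2) - (norm D)\<^sup>2 / N"
    using N power2_norm_eq_inner[of D] by (simp add: c_def power2_eq_square field_simps)
  finally have "(norm D)\<^sup>2 / N \<le> 0" using opt[of c] by simp
  thus ?thesis using N by (simp add: D_def[symmetric] divide_le_0_iff)
qed

lemma sum_cross3_eq_0_if_rotation_optimal:
  fixes x y :: "'i::finite \<Rightarrow> real^3"
  assumes opt: "\<And>R. rotation_matrix R \<Longrightarrow>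
    (\<Sum>i\<in>UNIV. (norm (x i - y i))\<^sup>2) \<le> (\<Sum>i\<in>UNIV. (norm (x i - R *v y i))\<^sup>2)"
  shows "(\<Sum>i\<in>UNIV. cross3 (y i) (x i)) = 0"
proof -
  have inner_le: "(\<Sum>i\<in>UNIV. x i \<bullet> (R *v y i)) \<le> (\<Sum>i\<in>UNIV. x i \<bullet> y i)"
    if R: "rotation_matrix R" for R
    using opt[OF R]
    by (simp add: power2_norm_diff norm_rotation_matrix_mult[OF R] sum.distrib sum_subtractf
        sum_distrib_left[symmetric])
  have component: "(\<Sum>i\<in>UNIV. cross3 (y i) (x i)) $ k = 0"
    if rot_family: "\<And>c s. c\<^sup>2 + s\<^sup>2 = 1 \<Longrightarrow> rotation_matrix (R c s)"
      and inner_R: "\<And>c s u v. u \<bullet> (R c s *v v) = c * (u \<bullet> v - u$k * v$k) + s * cross3 v u $ k + u$k * v$k"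
    for R k
  proof -
    have "(\<Sum>i\<in>UNIV. cross3 (y i) (x i) $ k) = 0"
    proof (rule unit_circle_max_at_one_imp_eq_0)
      fix c s :: real
      assume "c\<^sup>2 + s\<^sup>2 = 1"
      from inner_le[OF rot_family[OF this]]
      show "c * (\<Sum>i\<in>UNIV. x i \<bullet> y i - x i $ k * y i $ k) + s * (\<Sum>i\<in>UNIV. cross3 (y i) (x i) $ k)
          \<le> (\<Sum>i\<in>UNIV. x i \<bullet> y i - x i $ k * y i $ k)"
        by (simp add: inner_R sum.distrib sum_subtractf sum_distrib_left[symmetric])
    qed
    thus ?thesis by (simp add: sum_component)
  qed
  show ?thesis
    using component[OF rotation_matrix_rotation_axis(1) inner_rotation_axis(1)]
      component[OF rotation_matrix_rotation_axis(2) inner_rotation_axis(2)]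
      component[OF rotation_matrix_rotation_axis(3) inner_rotation_axis(3)]
    by (simp add: vec_eq_iff forall_3)
qed

lemma se3_act_nth: "se3_act Q b y $ i = Q *v y $ i + b"
  by (simp add: se3_act_def)

lemma se3_act_se3_act: "se3_act R c (se3_act Q b y) = se3_act (R ** Q) (R *v b + c) y"
  by (simp add: se3_act_def vec_eq_iff matrix_vector_mul_assoc[symmetric] matrix_vector_right_distrib)

lemma se3_act_mem_se3_orbit:
  assumes "z \<in> se3_orbit y" "rotation_matrix R"
  shows "se3_act R c z \<in> se3_orbit y"
proof -
  obtain Q b where "rotation_matrix Q" "z = se3_act Q b y"
    using assms(1) unfolding se3_orbit_def by blast
  moreover have "rotation_matrix (R ** Q)"
    using assms(2) \<open>rotation_matrix Q\<close> by (rule rotation_matrix_mul)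
  ultimately show ?thesis
    unfolding se3_orbit_def by (auto simp: se3_act_se3_act)
qed

lemma is_RMSDAlign_sum_sq_le:
  fixes x :: "real^3^'n::finite"
  assumes "is_RMSDAlign x y z" "rotation_matrix R"
  shows "(\<Sum>i\<in>UNIV. (norm (x$i - z$i))\<^sup>2) \<le> (\<Sum>i\<in>UNIV. (norm (x$i - (R *v z$i + c)))\<^sup>2)"
proof -
  have "RMSD x z \<le> RMSD x (se3_act R c z)"
    using assms se3_act_mem_se3_orbit unfolding is_RMSDAlign_def by blast
  thus ?thesis by (simp add: RMSD_def se3_act_nth divide_le_cancel)
qed

lemma is_RMSDAlign_sum_eq:
  fixes x :: "real^3^'n::finite"
  assumes "is_RMSDAlign x y z"
  shows "(\<Sum>i\<in>UNIV. z$i) = (\<Sum>i\<in>UNIV. x$i)"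
proof -
  have "(\<Sum>i\<in>UNIV. x$i - z$i) = 0"
    by (rule sum_diff_eq_0_if_translation_optimal)
      (use is_RMSDAlign_sum_sq_le[OF assms rotation_matrix_id] in simp)
  thus ?thesis by (simp add: sum_subtractf)
qed

lemma is_RMSDAlign_sum_cross3_eq_0:
  fixes x :: "real^3^'n::finite"
  assumes "is_RMSDAlign x y z"
  shows "(\<Sum>i\<in>UNIV. cross3 (z$i) (x$i)) = 0"
  by (rule sum_cross3_eq_0_if_rotation_optimal)
    (use is_RMSDAlign_sum_sq_le[OF assms, where c = 0] in simp)

lemma bounded_bilinear_matrix_vector_mult:
  "bounded_bilinear (\<lambda>(A::real^'m^'n) v. A *v v)"
proof -
  have "bilinear (\<lambda>(A::real^'m^'n) v. A *v v)"
    by (simp add: bilinear_def linear_iff matrix_vector_mult_add_rdistrib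
        matrix_vector_right_distrib matrix_vector_mult_scaleR scaleR_matrix_vector_assoc)
  thus ?thesis by (simp add: bilinear_conv_bounded_bilinear)
qed

lemma bounded_bilinear_cross3: "bounded_bilinear cross3"
  using bilinear_cross by (simp add: bilinear_conv_bounded_bilinear)

lemma se3_act_nth_differentiable:
  fixes y :: "real \<Rightarrow> real^3^'n"
  assumes "Q differentiable (at t)" "b differentiable (at t)" "y differentiable (at t)"
  shows "(\<lambda>t. se3_act (Q t) (b t) (y t) $ i) differentiable (at t)"
proof -
  have Q': "(Q has_vector_derivative vector_derivative Q (at t)) (at t)"
    and b': "(b has_vector_derivative vector_derivative b (at t)) (at t)"
    and y': "(y has_vector_derivative vector_derivative y (at t)) (at t)"
    using assms by (simp_all add: vector_derivative_works[symmetric])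
  have "((\<lambda>t. y t $ i) has_vector_derivative vector_derivative y (at t) $ i) (at t)"
    using bounded_linear.has_vector_derivative[OF bounded_linear_vec_nth y'] .
  from has_vector_derivative_add[OF
      bounded_bilinear.has_vector_derivative[OF bounded_bilinear_matrix_vector_mult Q' this] b']
  show ?thesis unfolding se3_act_nth by (rule differentiableI_vector)
qed

lemma has_vector_derivative_const_imp_eq_0:
  assumes "(f has_vector_derivative f') (at t)" "\<And>t. f t = c"
  shows "f' = 0"
proof -
  have "f = (\<lambda>_. c)" using assms(2) by blast
  thus ?thesis using assms(1) has_vector_derivative_const vector_derivative_unique_at by blast
qed

lemma sum_cross3_centred_derivative_eq_0:
  fixes x :: "real^3^'n::finite" and y :: "real \<Rightarrow> real^3^'n"
  assumes y': "\<And>i. ((\<lambda>t. y t $ i) has_vector_derivative y' i) (at t)"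
    and sum_eq: "\<And>t. (\<Sum>i\<in>UNIV. y t $ i) = (\<Sum>i\<in>UNIV. x $ i)"
    and cross_eq: "\<And>t. (\<Sum>i\<in>UNIV. cross3 (y t $ i) (x $ i)) = 0"
  shows "(\<Sum>i\<in>UNIV. cross3 (x $ i - centroid x) (y' i)) = 0"
proof -
  have "((\<lambda>t. \<Sum>i\<in>UNIV. y t $ i) has_vector_derivative (\<Sum>i\<in>UNIV. y' i)) (at t)"
    by (rule has_vector_derivative_sum) (use y' in blast)
  hence sum_y': "(\<Sum>i\<in>UNIV. y' i) = 0"
    using sum_eq by (rule has_vector_derivative_const_imp_eq_0)
  have "((\<lambda>t. \<Sum>i\<in>UNIV. cross3 (y t $ i) (x $ i))
      has_vector_derivative (\<Sum>i\<in>UNIV. cross3 (y' i) (x $ i))) (at t)"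
    by (rule has_vector_derivative_sum, rule bounded_bilinear.has_vector_derivative
        [OF bounded_bilinear_cross3 y' has_vector_derivative_const, simplified])
  hence cross_y': "(\<Sum>i\<in>UNIV. cross3 (y' i) (x $ i)) = 0"
    using cross_eq by (rule has_vector_derivative_const_imp_eq_0)
  have "(\<Sum>i\<in>UNIV. cross3 (x $ i - centroid x) (y' i))
      = (\<Sum>i\<in>UNIV. cross3 (x $ i) (y' i)) - cross3 (centroid x) (\<Sum>i\<in>UNIV. y' i)"
    by (simp add: bounded_bilinear.diff_left[OF bounded_bilinear_cross3]
        bounded_bilinear.sum_right[OF bounded_bilinear_cross3] sum_subtractf)
  also have "\<dots> = - (\<Sum>i\<in>UNIV. cross3 (y' i) (x $ i))"
    using sum_y' by (subst cross_skew) (simp add: sum_negf)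
  finally show ?thesis using cross_y' by simp
qed

theorem mainTheorem2:
  fixes x :: "real^3^'n::finite"
    and F :: "real \<Rightarrow> real^3^'n \<Rightarrow> real^3^'n"
    and Q :: "real \<Rightarrow> real^3^3"
    and b :: "real \<Rightarrow> real^3"
  assumes noncoll: "\<not> collinear (range (\<lambda>i. x $ i))"
    and F0: "F 0 x = x"
    and Fdiff: "(\<lambda>t. F t x) differentiable (at 0)"
    and rot: "\<forall>t. rotation_matrix (Q t)"
    and align: "\<forall>t. is_RMSDAlign x (F t x) (se3_act (Q t) (b t) (F t x))"
    and align0: "se3_act (Q 0) (b 0) (F 0 x) = x"
    and Qdiff: "Q differentiable (at 0)"
    and bdiff: "b differentiable (at 0)"
  shows "((\<lambda>t. centroid (se3_act (Q t) (b t) (F t x))) has_vector_derivative 0) (at 0)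
    \<and> (\<Sum>i\<in>UNIV. cross3 (x $ i - centroid x)
          (vector_derivative (\<lambda>t. se3_act (Q t) (b t) (F t x) $ i) (at 0))) = 0"
proof -
  define y where "y t = se3_act (Q t) (b t) (F t x)" for t
  have sum_eq: "(\<Sum>i\<in>UNIV. y t $ i) = (\<Sum>i\<in>UNIV. x $ i)" for t
    using align is_RMSDAlign_sum_eq unfolding y_def by blast
  have cross_eq: "(\<Sum>i\<in>UNIV. cross3 (y t $ i) (x $ i)) = 0" for t
    using align is_RMSDAlign_sum_cross3_eq_0 unfolding y_def by blast
  have "(\<lambda>t. centroid (y t)) = (\<lambda>t. centroid x)"
    by (simp add: centroid_def sum_eq)
  hence "((\<lambda>t. centroid (y t)) has_vector_derivative 0) (at 0)" by simp
  moreover have "((\<lambda>t. y t $ i) has_vector_derivative vector_derivative (\<lambda>t. y t $ i) (at 0)) (at 0)" for i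
    using se3_act_nth_differentiable[OF Qdiff bdiff Fdiff]
    unfolding y_def vector_derivative_works[symmetric] .
  hence "(\<Sum>i\<in>UNIV. cross3 (x $ i - centroid x) (vector_derivative (\<lambda>t. y t $ i) (at 0))) = 0"
    using sum_eq cross_eq by (rule sum_cross3_centred_derivative_eq_0)
  ultimately show ?thesis unfolding y_def by blast
qed

end
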